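(* Let $L$ be a regular language over a finite alphabet $\Sigma$ and $\Delta$ a finite set of quantifier-free replacement queries (over string databases). Then $(q_L,\Delta)$ can be maintained in DynProp with suitable initialization.
   Context: Framework. A replacement rule for a relation symbol $R$ is $R := \mu_R(\bar p;\bar x)$, where $\mu_R$ is a first-order formula over the schema, $\bar x$ has the arity of $R$, and $\bar p$ is a tuple of parameter variables. A replacement query $\rho(\bar p)$ is a set of replacement rules for distinct relation symbols, all with the same parameter tuple $\bar p$; it is quantifier-free (resp. in $\mathrm{FO}[\exists^*]$) if all its formulas are quantifier-free (resp. existential). A change $\delta=\rho(\bar a)$ consists of $\rho$ and a tuple $\bar a$ of domain elements; $\delta(\mathcal D)$ replaces every relation $R$ having a rule in $\rho$ by $\{\bar b : \mathcal D\models \mu_R(\bar a;\bar b)\}$. A dynamic program operates on states consisting of an input database and an auxiliary database over a common fixed finite domain. For every allowed replacement query $\rho(\bar p)$ and every auxiliary symbol $T$ it has an update formula $\varphi_T(\bar p;\bar x)$ over input and auxiliary schema; on a change $\rho(\bar a)$ the input is replaced by its image and each $T$ becomes $\{\bar b: \text{old state}\models\varphi_T(\bar a,\bar b)\}$. A program maintains $(q,\Delta)$ if it has an auxiliary relation $Q$ that, after every nonempty sequence of changes from $\Delta$ applied to the initial input database, equals $q$ of the current input. DynFO / DynProp: update formulas first-order / quantifier-free. "With suitable initialization" means the initial auxiliary database need not be empty but may be a suitable auxiliary database depending on the initial input (polynomial-time computable in all cases of the paper). Strings: a word over $\Sigma$ is represented by a database with domain $\{1,\dots,n\}$, the natural linear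 order $<$, constants $\min=1$, $\max=n$, and one unary relation $R_\sigma$ per $\sigma\in\Sigma$, where each element is in at most one $R_\sigma$. Position $i$ carries $w_i=\sigma$ if $i\in R_\sigma$ and $w_i=\epsilon$ otherwise, and the database represents $w_1\cdots w_n$. Initially all $R_\sigma$ are empty. Changes never modify $<$, $\min$, $\max$, and only replacement queries are applied whose results again have each position in at most one $R_\sigma$. $q_L$ is the Boolean query that is true iff the represented word is in $L$. *)

theory Defs
  imports Main
begin

datatype dterm = Var nat | Min | Max

datatype 'r qf =
    QTrue | QFalse
  | Atom 'r "dterm list"
  | Eq dterm dterm
  | Less dterm dterm
  | Neg "'r qf"
  | Conj "'r qf" "'r qf"
  | Disj "'r qf" "'r qf"

fun tval :: "nat \<Rightarrow> (nat \<Rightarrow> nat) \<Rightarrow> dterm \<Rightarrow> nat" where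
  "tval n v (Var i) = v i"
| "tval n v Min = 1"
| "tval n v Max = n"

fun sat :: "nat \<Rightarrow> ('r \<Rightarrow> nat list set) \<Rightarrow> (nat \<Rightarrow> nat) \<Rightarrow> 'r qf \<Rightarrow> bool" where
  "sat n I v QTrue = True"
| "sat n I v QFalse = False"
| "sat n I v (Atom r ts) = (map (tval n v) ts \<in> I r)"
| "sat n I v (Eq s t) = (tval n v s = tval n v t)"
| "sat n I v (Less s t) = (tval n v s < tval n v t)"
| "sat n I v (Neg f) = (\<not> sat n I v f)"
| "sat n I v (Conj f g) = (sat n I v f \<and> sat n I v g)"
| "sat n I v (Disj f g) = (sat n I v f \<or> sat n I v g)"

fun rels :: "'r qf \<Rightarrow> 'r set" where
  "rels (Atom r ts) = {r}"
| "rels (Neg f) = rels f"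
| "rels (Conj f g) = rels f \<union> rels g"
| "rels (Disj f g) = rels f \<union> rels g"
| "rels _ = {}"

text \<open>Variable assignment from a tuple: variable i denotes the i-th entry
  (out-of-range variables default to min, which is harmless).\<close>
definition env :: "nat list \<Rightarrow> nat \<Rightarrow> nat" where
  "env xs i = (if i < length xs then xs ! i else 1)"

definition regular :: "('a::finite) list set \<Rightarrow> bool" where
  "regular L \<longleftrightarrow> (\<exists>(S::nat set) (\<delta>::nat \<Rightarrow> 'a \<Rightarrow> nat) q0 F.
      finite S \<and> q0 \<in> S \<and> (\<forall>q\<in>S. \<forall>a. \<delta> q a \<in> S) \<and> F \<subseteq> S \<and>
      L = {w. foldl \<delta> q0 w \<in> F})"

text \<open>An input database over domain {1..n}: one unary relation R_sigma per letter.\<close>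
definition inp_interp :: "('a \<Rightarrow> nat set) \<Rightarrow> 'a \<Rightarrow> nat list set" where
  "inp_interp R a = {[i] | i. i \<in> R a}"

definition valid_strdb :: "nat \<Rightarrow> ('a \<Rightarrow> nat set) \<Rightarrow> bool" where
  "valid_strdb n R \<longleftrightarrow> (\<forall>a. R a \<subseteq> {1..n}) \<and> (\<forall>i a b. i \<in> R a \<longrightarrow> i \<in> R b \<longrightarrow> a = b)"

text \<open>The represented word w_1 ... w_n (positions without letter carry epsilon).\<close>
definition word :: "nat \<Rightarrow> ('a \<Rightarrow> nat set) \<Rightarrow> 'a list" where
  "word n R = concat (map (\<lambda>i. if \<exists>a. i \<in> R a then [THE a. i \<in> R a] else []) [1..<Suc n])"

text \<open>A quantifier-free replacement query: (k, rules), k = number of parameters,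
  rules a = Some mu means a rule R_a := mu(p;x), where the parameters p are the
  variables 0..k-1 and x is the variable k.\<close>
type_synonym 'a rq = "nat \<times> ('a \<Rightarrow> 'a qf option)"

definition apply_rq :: "nat \<Rightarrow> 'a rq \<Rightarrow> nat list \<Rightarrow> ('a \<Rightarrow> nat set) \<Rightarrow> ('a \<Rightarrow> nat set)" where
  "apply_rq n \<rho> as R = (\<lambda>a. case snd \<rho> a of
      None \<Rightarrow> R a
    | Some \<mu> \<Rightarrow> {b \<in> {1..n}. sat n (inp_interp R) (env (as @ [b])) \<mu>})"

text \<open>Auxiliary symbols are 0..naux-1 with arities; qsym is the designated 0-ary
  query symbol Q.  upd rho T is the update formula phi_T(p;x) for replacement query rho
  over the input and auxiliary schema: parameters are variables 0..k-1, x is k..k+ar T-1.\<close>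
record 'a dynprog =
  naux :: nat
  arity :: "nat \<Rightarrow> nat"
  qsym :: nat
  upd :: "'a rq \<Rightarrow> nat \<Rightarrow> ('a + nat) qf"

definition wf_dynprog :: "'a rq set \<Rightarrow> 'a dynprog \<Rightarrow> bool" where
  "wf_dynprog \<Delta> P \<longleftrightarrow> qsym P < naux P \<and> arity P (qsym P) = 0 \<and>
     (\<forall>\<rho>\<in>\<Delta>. \<forall>T < naux P. \<forall>r \<in> rels (upd P \<rho> T).
        (case r of Inl _ \<Rightarrow> True | Inr T' \<Rightarrow> T' < naux P))"

definition state_interp :: "('a \<Rightarrow> nat set) \<Rightarrow> (nat \<Rightarrow> nat list set) \<Rightarrow> ('a + nat) \<Rightarrow> nat list set" where
  "state_interp R A r = (case r of Inl a \<Rightarrow> inp_interp R a | Inr T \<Rightarrow> A T)"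

definition upd_aux :: "nat \<Rightarrow> 'a dynprog \<Rightarrow> 'a rq \<Rightarrow> nat list \<Rightarrow> ('a \<Rightarrow> nat set)
    \<Rightarrow> (nat \<Rightarrow> nat list set) \<Rightarrow> (nat \<Rightarrow> nat list set)" where
  "upd_aux n P \<rho> as R A = (\<lambda>T. if T < naux P then
      {bs. length bs = arity P T \<and> set bs \<subseteq> {1..n} \<and>
           sat n (state_interp R A) (env (as @ bs)) (upd P \<rho> T)}
    else {})"

fun allowed_seq :: "nat \<Rightarrow> 'a rq set \<Rightarrow> ('a \<Rightarrow> nat set) \<Rightarrow> ('a rq \<times> nat list) list \<Rightarrow> bool" where
  "allowed_seq n \<Delta> R [] = True"
| "allowed_seq n \<Delta> R ((\<rho>, as) # cs) =
     (\<rho> \<in> \<Delta> \<and> length as = fst \<rho> \<and> set as \<subseteq> {1..n} \<and>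
      valid_strdb n (apply_rq n \<rho> as R) \<and> allowed_seq n \<Delta> (apply_rq n \<rho> as R) cs)"

fun run :: "nat \<Rightarrow> 'a dynprog \<Rightarrow> ('a rq \<times> nat list) list \<Rightarrow> ('a \<Rightarrow> nat set)
    \<Rightarrow> (nat \<Rightarrow> nat list set) \<Rightarrow> ('a \<Rightarrow> nat set) \<times> (nat \<Rightarrow> nat list set)" where
  "run n P [] R A = (R, A)"
| "run n P ((\<rho>, as) # cs) R A = run n P cs (apply_rq n \<rho> as R) (upd_aux n P \<rho> as R A)"

definition maintains_init :: "'a rq set \<Rightarrow> 'a list set \<Rightarrow> 'a dynprog \<Rightarrow> (nat \<Rightarrow> nat \<Rightarrow> nat list set) \<Rightarrow> bool" where
  "maintains_init \<Delta> L P init \<longleftrightarrow>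
     (\<forall>n \<ge> 1. \<forall>cs. cs \<noteq> [] \<longrightarrow> allowed_seq n \<Delta> (\<lambda>_. {}) cs \<longrightarrow>
        (let (R, A) = run n P cs (\<lambda>_. {}) (init n)
         in ([] \<in> A (qsym P) \<longleftrightarrow> word n R \<in> L)))"

definition dynprop_init_maintainable :: "'a rq set \<Rightarrow> 'a list set \<Rightarrow> bool" where
  "dynprop_init_maintainable \<Delta> L \<longleftrightarrow>
     (\<exists>P init. wf_dynprog \<Delta> P \<and> maintains_init \<Delta> L P init)"

end

theory Submission
  imports Defs
begin

text \<open>Fix a DFA for L. For every map h on letter sets and states q, q' the program keeps the
  binary relation T(h,q,q') of all i, j such that the DFA moves from q to q' on the word strictly
  between positions i and j, each position's letter set first relabelled by h. After a change with
  parameters p, consider the positions p, i, j, min and max: all positions strictly between two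
  neighbours among them have the same order type with respect to them, so the change replaces their
  letter sets by a fixed function G of the old ones, and on such a gap the new T(h,q,q') is the old
  T(h \<circ> G,q,q'). The new T(h,q,q') and the new query result are thus obtained by composing old
  relations along the neighbours, and so depend only on the quantifier-free type of the tuple
  (p, i, j) in the old state. A property determined by that type is defined by the disjunction
  of the finitely many types realising it.\<close>

section \<open>Quantifier-free formulas\<close>

fun Disj_list :: "'r qf list \<Rightarrow> 'r qf" where
  "Disj_list [] = QFalse"
| "Disj_list (f # fs) = Disj f (Disj_list fs)"

fun Conj_list :: "'r qf list \<Rightarrow> 'r qf" where
  "Conj_list [] = QTrue"
| "Conj_list (f # fs) = Conj f (Conj_list fs)"

lemma sat_Disj_list [simp]: "sat n I v (Disj_list fs) \<longleftrightarrow> (\<exists>f\<in>set fs. sat n I v f)"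
  by (induction fs) auto

lemma sat_Conj_list [simp]: "sat n I v (Conj_list fs) \<longleftrightarrow> (\<forall>f\<in>set fs. sat n I v f)"
  by (induction fs) auto

lemma rels_Disj_list [simp]: "rels (Disj_list fs) = (\<Union>f\<in>set fs. rels f)"
  by (induction fs) auto

lemma rels_Conj_list [simp]: "rels (Conj_list fs) = (\<Union>f\<in>set fs. rels f)"
  by (induction fs) auto

definition list_of_set :: "'x set \<Rightarrow> 'x list" where
  "list_of_set X = (SOME xs. set xs = X)"

lemma set_list_of_set [simp]: "finite X \<Longrightarrow> set (list_of_set X) = X"
  unfolding list_of_set_def by (metis (mono_tags) finite_list someI_ex)

lemma sat_cong:
  assumes "\<And>s t. tval n1 v1 s < tval n1 v1 t \<longleftrightarrow> tval n2 v2 s < tval n2 v2 t"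
    and "\<And>s t. tval n1 v1 s = tval n1 v1 t \<longleftrightarrow> tval n2 v2 s = tval n2 v2 t"
    and "\<And>r ts. map (tval n1 v1) ts \<in> I1 r \<longleftrightarrow> map (tval n2 v2) ts \<in> I2 r"
  shows "sat n1 I1 v1 \<phi> \<longleftrightarrow> sat n2 I2 v2 \<phi>"
  using assms by (induction \<phi>) auto

definition valuation :: "nat \<Rightarrow> (nat \<Rightarrow> nat) \<Rightarrow> bool" where
  "valuation n v \<longleftrightarrow> 1 \<le> n \<and> (\<forall>i. v i \<in> {1..n})"

lemma tval_in_domain: "valuation n v \<Longrightarrow> tval n v t \<in> {1..n}"
  by (cases t) (auto simp: valuation_def)

lemma valuation_env: "1 \<le> n \<Longrightarrow> set xs \<subseteq> {1..n} \<Longrightarrow> valuation n (env xs)"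
  unfolding valuation_def env_def by (auto dest: nth_mem)

lemma map_env_prefix: "length as = k \<Longrightarrow> map (env (as @ bs)) [0..<k] = as"
  by (rule nth_equalityI) (auto simp: env_def nth_append)

lemma map_inp_interp_iff:
  "map f ts \<in> inp_interp R a \<longleftrightarrow> (case ts of [x] \<Rightarrow> f x \<in> R a | _ \<Rightarrow> False)"
  unfolding inp_interp_def by (cases ts rule: remdups_adj.cases) auto

definition atom_type :: "'r qf set \<Rightarrow> nat \<Rightarrow> ('r \<Rightarrow> nat list set) \<Rightarrow> (nat \<Rightarrow> nat) \<Rightarrow> 'r qf set" where
  "atom_type At n I v = {\<alpha> \<in> At. sat n I v \<alpha>}"

definition type_formula :: "'r qf set \<Rightarrow> 'r qf set \<Rightarrow> 'r qf" where
  "type_formula At \<Phi> = Conj_list (map (\<lambda>\<alpha>. if \<alpha> \<in> \<Phi> then \<alpha> else Neg \<alpha>) (list_of_set At))"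

definition types_formula :: "'r qf set \<Rightarrow> 'r qf set set \<Rightarrow> 'r qf" where
  "types_formula At \<T> = Disj_list (map (type_formula At) (list_of_set \<T>))"

lemma sat_type_formula:
  assumes "finite At" and "\<Phi> \<subseteq> At"
  shows "sat n I v (type_formula At \<Phi>) \<longleftrightarrow> atom_type At n I v = \<Phi>"
proof -
  have "sat n I v (type_formula At \<Phi>) \<longleftrightarrow> (\<forall>\<alpha>\<in>At. sat n I v (if \<alpha> \<in> \<Phi> then \<alpha> else Neg \<alpha>))"
    unfolding type_formula_def sat_Conj_list set_map set_list_of_set[OF assms(1)] by blast
  also have "\<dots> \<longleftrightarrow> (\<forall>\<alpha>\<in>At. \<alpha> \<in> \<Phi> \<longleftrightarrow> sat n I v \<alpha>)"
    by (intro ball_cong) simp_all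
  finally show ?thesis
    using assms(2) unfolding atom_type_def by blast
qed

lemma sat_types_formula:
  assumes "finite At" and "\<T> \<subseteq> Pow At"
  shows "sat n I v (types_formula At \<T>) \<longleftrightarrow> atom_type At n I v \<in> \<T>"
proof -
  have "finite \<T>"
    using assms finite_subset by blast
  then have "sat n I v (types_formula At \<T>) \<longleftrightarrow> (\<exists>\<Phi>\<in>\<T>. sat n I v (type_formula At \<Phi>))"
    by (simp add: types_formula_def)
  also have "\<dots> \<longleftrightarrow> (\<exists>\<Phi>\<in>\<T>. atom_type At n I v = \<Phi>)"
    using assms by (intro bex_cong) (auto simp: sat_type_formula)
  finally show ?thesis
    by blast
qed

lemma rels_types_formula: "finite At \<Longrightarrow> rels (types_formula At \<T>) \<subseteq> (\<Union>\<alpha>\<in>At. rels \<alpha>)"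
  by (auto simp: types_formula_def type_formula_def split: if_splits)

section \<open>Words of string databases\<close>

type_synonym 'a strdb = "'a \<Rightarrow> nat set"

definition letters :: "'a strdb \<Rightarrow> nat \<Rightarrow> 'a set" where
  "letters R i = {a. i \<in> R a}"

text \<open>As in the definition of word, this picks an unspecified letter at a position carrying
  several letters, so nothing below needs the database to be valid.\<close>
definition letter_word :: "'a set \<Rightarrow> 'a list" where
  "letter_word X = (if X = {} then [] else [THE a. a \<in> X])"

definition subst_segment :: "('a set \<Rightarrow> 'a set) \<Rightarrow> 'a strdb \<Rightarrow> nat \<Rightarrow> nat \<Rightarrow> 'a list" where
  "subst_segment h R u w = concat (map (\<lambda>i. letter_word (h (letters R i))) [Suc u..<w])"

lemma word_eq_concat_letter_word: "word n R = concat (map (\<lambda>i. letter_word (letters R i)) [1..<Suc n])"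
  unfolding word_def letter_word_def letters_def by (intro arg_cong[where f=concat] map_cong) auto

lemma word_one: "word 1 R = letter_word (letters R 1)"
  by (simp add: word_eq_concat_letter_word)

lemma word_split:
  assumes "2 \<le> n"
  shows "word n R = letter_word (letters R 1) @ subst_segment id R 1 n @ letter_word (letters R n)"
proof -
  have "[1..<Suc n] = [1] @ [Suc 1..<n] @ [n]"
    using assms by (simp add: upt_conv_Cons)
  then show ?thesis
    unfolding word_eq_concat_letter_word subst_segment_def by simp
qed

lemma subst_segment_split:
  assumes "u < c" and "c < w"
  shows "subst_segment h R u w = subst_segment h R u c @ letter_word (h (letters R c)) @ subst_segment h R c w"
proof -
  have "[Suc u..<w] = [Suc u..<c] @ [c..<w]"
    using assms upt_add_eq_append[of "Suc u" c "w - c"] by simp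
  also have "[c..<w] = c # [Suc c..<w]"
    using assms(2) by (rule upt_conv_Cons)
  finally show ?thesis
    unfolding subst_segment_def by simp
qed

lemma subst_segment_cong:
  assumes "\<And>i. u < i \<Longrightarrow> i < w \<Longrightarrow> h (letters R i) = h' (letters R' i)"
  shows "subst_segment h R u w = subst_segment h' R' u w"
  unfolding subst_segment_def using assms by (intro arg_cong[where f=concat] map_cong) auto

section \<open>Order types of positions relative to terms\<close>

definition terms :: "nat \<Rightarrow> dterm set" where
  "terms m = insert Min (insert Max (Var ` {..<m}))"

lemma finite_terms [simp]: "finite (terms m)"
  by (simp add: terms_def)

lemma terms_intros: "Min \<in> terms m" "Max \<in> terms m" "i < m \<Longrightarrow> Var i \<in> terms m"
  by (auto simp: terms_def)

definition same_order :: "nat \<Rightarrow> nat \<Rightarrow> (nat \<Rightarrow> nat) \<Rightarrow> nat \<Rightarrow> (nat \<Rightarrow> nat) \<Rightarrow> bool" where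
  "same_order m n1 v1 n2 v2 \<longleftrightarrow> (\<forall>s\<in>terms m. \<forall>t\<in>terms m.
     (tval n1 v1 s < tval n1 v1 t \<longleftrightarrow> tval n2 v2 s < tval n2 v2 t) \<and>
     (tval n1 v1 s = tval n1 v1 t \<longleftrightarrow> tval n2 v2 s = tval n2 v2 t))"

lemma same_orderD:
  assumes "same_order m n1 v1 n2 v2" and "s \<in> terms m" and "t \<in> terms m"
  shows "tval n1 v1 s < tval n1 v1 t \<longleftrightarrow> tval n2 v2 s < tval n2 v2 t"
    and "tval n1 v1 s = tval n1 v1 t \<longleftrightarrow> tval n2 v2 s = tval n2 v2 t"
  using assms unfolding same_order_def by blast+

lemma same_order_refl: "same_order m n v n v"
  unfolding same_order_def by simp

definition same_position :: "nat \<Rightarrow> nat \<Rightarrow> (nat \<Rightarrow> nat) \<Rightarrow> nat \<Rightarrow> nat \<Rightarrow> (nat \<Rightarrow> nat) \<Rightarrow> nat \<Rightarrow> bool" where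
  "same_position m n1 v1 y1 n2 v2 y2 \<longleftrightarrow> (\<forall>t\<in>terms m.
     (y1 < tval n1 v1 t \<longleftrightarrow> y2 < tval n2 v2 t) \<and> (tval n1 v1 t < y1 \<longleftrightarrow> tval n2 v2 t < y2) \<and>
     (y1 = tval n1 v1 t \<longleftrightarrow> y2 = tval n2 v2 t))"

lemma same_position_term:
  assumes "same_order m n1 v1 n2 v2" and "s \<in> terms m"
  shows "same_position m n1 v1 (tval n1 v1 s) n2 v2 (tval n2 v2 s)"
  using assms unfolding same_order_def same_position_def by blast

definition no_term_between :: "nat \<Rightarrow> nat \<Rightarrow> (nat \<Rightarrow> nat) \<Rightarrow> dterm \<Rightarrow> dterm \<Rightarrow> bool" where
  "no_term_between m n v s t \<longleftrightarrow> \<not> (\<exists>r\<in>terms m. tval n v s < tval n v r \<and> tval n v r < tval n v t)"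

lemma no_term_between_transfer:
  assumes "same_order m n1 v1 n2 v2" and "s \<in> terms m" and "t \<in> terms m"
    and "no_term_between m n1 v1 s t"
  shows "no_term_between m n2 v2 s t"
  using assms unfolding no_term_between_def same_order_def by blast

lemma same_position_in_gap:
  assumes ord: "same_order m n1 v1 n2 v2" and st: "s \<in> terms m" "t \<in> terms m"
    and gap: "no_term_between m n1 v1 s t"
    and y1: "tval n1 v1 s < y1" "y1 < tval n1 v1 t"
    and y2: "tval n2 v2 s < y2" "y2 < tval n2 v2 t"
  shows "same_position m n1 v1 y1 n2 v2 y2"
  unfolding same_position_def
proof
  fix r assume r: "r \<in> terms m"
  note o = same_orderD[OF ord]
  show "(y1 < tval n1 v1 r \<longleftrightarrow> y2 < tval n2 v2 r) \<and> (tval n1 v1 r < y1 \<longleftrightarrow> tval n2 v2 r < y2) \<and>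
      (y1 = tval n1 v1 r \<longleftrightarrow> y2 = tval n2 v2 r)"
  proof (cases "tval n1 v1 r \<le> tval n1 v1 s")
    case True
    then have "tval n2 v2 r \<le> tval n2 v2 s"
      using o[OF r st(1)] by (simp add: le_less)
    then show ?thesis
      using True y1 y2 by linarith
  next
    case False
    then have left: "tval n1 v1 t \<le> tval n1 v1 r"
      using gap r unfolding no_term_between_def by auto
    then have "tval n2 v2 t \<le> tval n2 v2 r"
      using o[OF st(2) r] by (auto simp: le_less)
    then show ?thesis
      using left y1 y2 by linarith
  qed
qed

section \<open>Effect of a replacement query on the letters at a position\<close>

definition same_letters :: "nat \<Rightarrow> nat \<Rightarrow> 'a strdb \<Rightarrow> (nat \<Rightarrow> nat) \<Rightarrow> nat \<Rightarrow> 'a strdb \<Rightarrow> (nat \<Rightarrow> nat) \<Rightarrow> bool" where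
  "same_letters m n1 R1 v1 n2 R2 v2 \<longleftrightarrow> (\<forall>t\<in>terms m. letters R1 (tval n1 v1 t) = letters R2 (tval n2 v2 t))"

lemma same_letters_refl: "same_letters m n R v n R v"
  unfolding same_letters_def by simp

text \<open>In the environment of a rule body, with parameters v 0, ..., v (k - 1) and the position
  y as variable k, every term denotes y (result None) or the value of one of the terms m.\<close>
definition rule_term :: "nat \<Rightarrow> dterm \<Rightarrow> dterm option" where
  "rule_term k s = (case s of
      Var i \<Rightarrow> if i < k then Some (Var i) else if i = k then None else Some Min
    | Min \<Rightarrow> Some Min
    | Max \<Rightarrow> Some Max)"

lemma tval_rule_env:
  "tval n (env (map v [0..<k] @ [y])) s = (case rule_term k s of None \<Rightarrow> y | Some t \<Rightarrow> tval n v t)"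
  by (cases s) (auto simp: rule_term_def env_def nth_append)

lemma rule_term_in_terms: "k \<le> m \<Longrightarrow> rule_term k s = Some t \<Longrightarrow> t \<in> terms m"
  by (cases s) (auto simp: rule_term_def terms_def split: if_splits)

lemma letters_apply_rq_eq:
  assumes k: "fst \<rho> = k" "k \<le> m"
    and ord: "same_order m n1 v1 n2 v2" and lets: "same_letters m n1 R1 v1 n2 R2 v2"
    and pos: "same_position m n1 v1 y1 n2 v2 y2"
    and lets_y: "letters R1 y1 = letters R2 y2"
    and y: "y1 \<in> {1..n1}" "y2 \<in> {1..n2}"
  shows "letters (apply_rq n1 \<rho> (map v1 [0..<k]) R1) y1 = letters (apply_rq n2 \<rho> (map v2 [0..<k]) R2) y2"
proof -
  let ?e1 = "env (map v1 [0..<k] @ [y1])" and ?e2 = "env (map v2 [0..<k] @ [y2])"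
  have in_terms: "rule_term k s = Some t \<Longrightarrow> t \<in> terms m" for s t
    using k(2) by (rule rule_term_in_terms)
  have order: "(tval n1 ?e1 s < tval n1 ?e1 t \<longleftrightarrow> tval n2 ?e2 s < tval n2 ?e2 t) \<and>
      (tval n1 ?e1 s = tval n1 ?e1 t \<longleftrightarrow> tval n2 ?e2 s = tval n2 ?e2 t)" for s t
    using pos same_orderD[OF ord] in_terms[of s] in_terms[of t] unfolding same_position_def
    by (cases "rule_term k s"; cases "rule_term k t") (auto simp: tval_rule_env)
  have "letters R1 (tval n1 ?e1 s) = letters R2 (tval n2 ?e2 s)" for s
    using lets lets_y in_terms[of s] unfolding same_letters_def
    by (cases "rule_term k s") (auto simp: tval_rule_env)
  then have "tval n1 ?e1 s \<in> R1 a \<longleftrightarrow> tval n2 ?e2 s \<in> R2 a" for s a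
    unfolding letters_def by blast
  then have atoms: "map (tval n1 ?e1) ts \<in> inp_interp R1 a \<longleftrightarrow> map (tval n2 ?e2) ts \<in> inp_interp R2 a" for ts a
    by (simp add: map_inp_interp_iff split: list.split)
  have "sat n1 (inp_interp R1) ?e1 \<mu> \<longleftrightarrow> sat n2 (inp_interp R2) ?e2 \<mu>" for \<mu>
    using order atoms by (intro sat_cong) blast+
  moreover have "y1 \<in> R1 a \<longleftrightarrow> y2 \<in> R2 a" for a
    using lets_y unfolding letters_def by blast
  ultimately show ?thesis
    using y unfolding letters_def apply_rq_def by (auto split: option.split)
qed

lemma letters_apply_rq_eq_term:
  assumes "fst \<rho> = k" "k \<le> m"
    and ord: "same_order m n1 v1 n2 v2" and lets: "same_letters m n1 R1 v1 n2 R2 v2"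
    and val: "valuation n1 v1" "valuation n2 v2" and s: "s \<in> terms m"
  shows "letters (apply_rq n1 \<rho> (map v1 [0..<k]) R1) (tval n1 v1 s)
       = letters (apply_rq n2 \<rho> (map v2 [0..<k]) R2) (tval n2 v2 s)"
proof (rule letters_apply_rq_eq[OF assms(1-4)])
  show "same_position m n1 v1 (tval n1 v1 s) n2 v2 (tval n2 v2 s)"
    using ord s by (rule same_position_term)
  show "letters R1 (tval n1 v1 s) = letters R2 (tval n2 v2 s)"
    using lets s unfolding same_letters_def by simp
  show "tval n1 v1 s \<in> {1..n1}" "tval n2 v2 s \<in> {1..n2}"
    using val tval_in_domain by blast+
qed

lemma letters_apply_rq_eq_gap:
  assumes "fst \<rho> = k" "k \<le> m"
    and ord: "same_order m n1 v1 n2 v2" and lets: "same_letters m n1 R1 v1 n2 R2 v2"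
    and val: "valuation n1 v1" "valuation n2 v2"
    and st: "s \<in> terms m" "t \<in> terms m" and gap: "no_term_between m n1 v1 s t"
    and y1: "tval n1 v1 s < y1" "y1 < tval n1 v1 t"
    and y2: "tval n2 v2 s < y2" "y2 < tval n2 v2 t"
    and old: "letters R1 y1 = letters R2 y2"
  shows "letters (apply_rq n1 \<rho> (map v1 [0..<k]) R1) y1 = letters (apply_rq n2 \<rho> (map v2 [0..<k]) R2) y2"
proof (rule letters_apply_rq_eq[OF assms(1-4) _ old])
  show "same_position m n1 v1 y1 n2 v2 y2"
    using ord st gap y1 y2 by (rule same_position_in_gap)
  show "y1 \<in> {1..n1}" "y2 \<in> {1..n2}"
    using y1 y2 tval_in_domain[OF val(1), of t] tval_in_domain[OF val(2), of t] by auto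
qed

lemma ex_common_factorization:
  assumes "\<And>y y'. y \<in> I1 \<Longrightarrow> y' \<in> I1 \<Longrightarrow> f1 y = f1 y' \<Longrightarrow> g1 y = g1 y'"
    and "\<And>y y'. y \<in> I1 \<Longrightarrow> y' \<in> I2 \<Longrightarrow> f1 y = f2 y' \<Longrightarrow> g1 y = g2 y'"
    and "\<And>y y'. y \<in> I2 \<Longrightarrow> y' \<in> I2 \<Longrightarrow> f2 y = f2 y' \<Longrightarrow> g2 y = g2 y'"
  obtains G where "\<And>y. y \<in> I1 \<Longrightarrow> g1 y = G (f1 y)" and "\<And>y. y \<in> I2 \<Longrightarrow> g2 y = G (f2 y)"
proof
  define G where "G X = (if \<exists>y\<in>I1. f1 y = X then g1 (SOME y. y \<in> I1 \<and> f1 y = X)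
    else g2 (SOME y. y \<in> I2 \<and> f2 y = X))" for X
  show "g1 y = G (f1 y)" if y: "y \<in> I1" for y
  proof -
    let ?y = "SOME y'. y' \<in> I1 \<and> f1 y' = f1 y"
    have ex: "\<exists>y'\<in>I1. f1 y' = f1 y"
      using y by blast
    then have "?y \<in> I1" "f1 ?y = f1 y"
      using someI_ex[of "\<lambda>y'. y' \<in> I1 \<and> f1 y' = f1 y"] by blast+
    then have "g1 y = g1 ?y"
      using assms(1)[OF y] by simp
    also have "\<dots> = G (f1 y)"
      unfolding G_def using ex by simp
    finally show ?thesis .
  qed
  show "g2 y = G (f2 y)" if y: "y \<in> I2" for y
  proof (cases "\<exists>y'\<in>I1. f1 y' = f2 y")
    case True
    let ?y = "SOME y'. y' \<in> I1 \<and> f1 y' = f2 y"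
    have "?y \<in> I1" "f1 ?y = f2 y"
      using True someI_ex[of "\<lambda>y'. y' \<in> I1 \<and> f1 y' = f2 y"] by blast+
    then have "g2 y = g1 ?y"
      using assms(2)[OF _ y] by simp
    also have "\<dots> = G (f2 y)"
      unfolding G_def using True by simp
    finally show ?thesis .
  next
    case False
    let ?y = "SOME y'. y' \<in> I2 \<and> f2 y' = f2 y"
    have "\<exists>y'\<in>I2. f2 y' = f2 y"
      using y by blast
    then have "?y \<in> I2" "f2 ?y = f2 y"
      using someI_ex[of "\<lambda>y'. y' \<in> I2 \<and> f2 y' = f2 y"] by blast+
    then have "g2 y = g2 ?y"
      using assms(3)[OF y] by simp
    also have "\<dots> = G (f2 y)"
      unfolding G_def using False by simp
    finally show ?thesis .
  qed
qed

lemma ex_gap_relabelling: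
  assumes k: "fst \<rho> = k" "k \<le> m" and val: "valuation n1 v1" "valuation n2 v2"
    and ord: "same_order m n1 v1 n2 v2" and lets: "same_letters m n1 R1 v1 n2 R2 v2"
    and st: "s \<in> terms m" "t \<in> terms m" and gap: "no_term_between m n1 v1 s t"
  obtains G where
    "\<And>y. y \<in> {tval n1 v1 s<..<tval n1 v1 t} \<Longrightarrow>
      letters (apply_rq n1 \<rho> (map v1 [0..<k]) R1) y = G (letters R1 y)"
    "\<And>y. y \<in> {tval n2 v2 s<..<tval n2 v2 t} \<Longrightarrow>
      letters (apply_rq n2 \<rho> (map v2 [0..<k]) R2) y = G (letters R2 y)"
proof (rule ex_common_factorization[OF _ _ _ that])
  let ?R1' = "apply_rq n1 \<rho> (map v1 [0..<k]) R1" and ?R2' = "apply_rq n2 \<rho> (map v2 [0..<k]) R2"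
  fix y y'
  show "letters ?R1' y = letters ?R1' y'"
    if "y \<in> {tval n1 v1 s<..<tval n1 v1 t}" "y' \<in> {tval n1 v1 s<..<tval n1 v1 t}"
      "letters R1 y = letters R1 y'"
    using that by (intro letters_apply_rq_eq_gap[OF k same_order_refl same_letters_refl val(1,1) st gap]) auto
  show "letters ?R1' y = letters ?R2' y'"
    if "y \<in> {tval n1 v1 s<..<tval n1 v1 t}" "y' \<in> {tval n2 v2 s<..<tval n2 v2 t}"
      "letters R1 y = letters R2 y'"
    using that by (intro letters_apply_rq_eq_gap[OF k ord lets val st gap]) auto
  have "no_term_between m n2 v2 s t"
    using ord st gap by (rule no_term_between_transfer)
  then show "letters ?R2' y = letters ?R2' y'"
    if "y \<in> {tval n2 v2 s<..<tval n2 v2 t}" "y' \<in> {tval n2 v2 s<..<tval n2 v2 t}"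
      "letters R2 y = letters R2 y'"
    using that by (intro letters_apply_rq_eq_gap[OF k same_order_refl same_letters_refl val(2,2) st]) auto
qed

section \<open>The dynamic program for a DFA\<close>

type_synonym 'a label = "('a set \<Rightarrow> 'a set) \<times> nat \<times> nat"

locale dfa_aux_encoding =
  fixes S :: "nat set" and \<delta> :: "nat \<Rightarrow> 'a::finite \<Rightarrow> nat" and q0 :: nat and F :: "nat set"
    and enc :: "'a label \<Rightarrow> nat"
  assumes finite_S: "finite S" and \<delta>_closed: "\<And>q a. q \<in> S \<Longrightarrow> \<delta> q a \<in> S" and q0_in_S: "q0 \<in> S"
    and enc_bij: "bij_betw enc (UNIV \<times> S \<times> S)
      {0..<card (UNIV \<times> S \<times> S :: 'a label set)}"
begin

abbreviation labels :: "'a label set" where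
  "labels \<equiv> UNIV \<times> S \<times> S"

lemma finite_labels: "finite labels"
  using finite_S by simp

lemma enc_less: "c \<in> labels \<Longrightarrow> enc c < card labels"
  using bij_betw_apply[OF enc_bij] by auto

lemma inv_enc: "c \<in> labels \<Longrightarrow> inv_into labels enc (enc c) = c"
  using bij_betw_inv_into_left[OF enc_bij] by auto

lemma foldl_\<delta>_in_S: "q \<in> S \<Longrightarrow> foldl \<delta> q w \<in> S"
  by (induction w arbitrary: q) (auto simp: \<delta>_closed)

definition seg_run :: "'a strdb \<Rightarrow> 'a label \<Rightarrow> nat \<Rightarrow> nat \<Rightarrow> bool" where
  "seg_run R c i j \<longleftrightarrow> (case c of (h, q, q') \<Rightarrow> foldl \<delta> q (subst_segment h R i j) = q')"

definition aux_invariant :: "nat \<Rightarrow> 'a strdb \<Rightarrow> (nat \<Rightarrow> nat list set) \<Rightarrow> bool" where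
  "aux_invariant n R A \<longleftrightarrow>
     (\<forall>c\<in>labels. A (enc c) = {[i, j] | i j. i \<in> {1..n} \<and> j \<in> {1..n} \<and> seg_run R c i j})"

definition good_state :: "nat \<Rightarrow> 'a strdb \<Rightarrow> (nat \<Rightarrow> nat list set) \<Rightarrow> (nat \<Rightarrow> nat) \<Rightarrow> bool" where
  "good_state n R A v \<longleftrightarrow> valuation n v \<and> aux_invariant n R A"

definition atoms :: "nat \<Rightarrow> ('a + nat) qf set" where
  "atoms m = (\<lambda>(s, t). Eq s t) ` (terms m \<times> terms m)
     \<union> (\<lambda>(s, t). Less s t) ` (terms m \<times> terms m)
     \<union> (\<lambda>(a, t). Atom (Inl a) [t]) ` (UNIV \<times> terms m)
     \<union> (\<lambda>(c, s, t). Atom (Inr (enc c)) [s, t]) ` (labels \<times> terms m \<times> terms m)"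

lemma finite_atoms: "finite (atoms m)"
  unfolding atoms_def using finite_labels by simp

abbreviation state_type :: "nat \<Rightarrow> nat \<Rightarrow> 'a strdb \<Rightarrow> (nat \<Rightarrow> nat list set) \<Rightarrow> (nat \<Rightarrow> nat) \<Rightarrow> ('a + nat) qf set" where
  "state_type m n R A v \<equiv> atom_type (atoms m) n (state_interp R A) v"

definition defining_formula :: "nat \<Rightarrow> (nat \<Rightarrow> 'a strdb \<Rightarrow> (nat \<Rightarrow> nat) \<Rightarrow> bool) \<Rightarrow> ('a + nat) qf" where
  "defining_formula m P = types_formula (atoms m)
     {state_type m n R A v | n R A v. good_state n R A v \<and> P n R v}"

lemma sat_defining_formula:
  assumes invariant: "\<And>n1 R1 A1 v1 n2 R2 A2 v2. good_state n1 R1 A1 v1 \<Longrightarrow> good_state n2 R2 A2 v2 \<Longrightarrow>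
      state_type m n1 R1 A1 v1 = state_type m n2 R2 A2 v2 \<Longrightarrow> P n1 R1 v1 \<Longrightarrow> P n2 R2 v2"
    and good: "good_state n R A v"
  shows "sat n (state_interp R A) v (defining_formula m P) \<longleftrightarrow> P n R v"
proof -
  have "sat n (state_interp R A) v (defining_formula m P) \<longleftrightarrow>
      state_type m n R A v \<in> {state_type m n R A v | n R A v. good_state n R A v \<and> P n R v}"
    unfolding defining_formula_def
    by (rule sat_types_formula[OF finite_atoms]) (auto simp: atom_type_def)
  then show ?thesis
    using invariant good by blast
qed

lemma rels_atoms_less: "\<alpha> \<in> atoms m \<Longrightarrow> Inr T \<in> rels \<alpha> \<Longrightarrow> T < card labels"
  unfolding atoms_def by (auto simp: enc_less)

lemma rels_defining_formula:
  "r \<in> rels (defining_formula m P) \<Longrightarrow> (case r of Inl _ \<Rightarrow> True | Inr T \<Rightarrow> T < card labels)"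
proof -
  assume "r \<in> rels (defining_formula m P)"
  then obtain \<alpha> where "\<alpha> \<in> atoms m" "r \<in> rels \<alpha>"
    using rels_types_formula[OF finite_atoms] unfolding defining_formula_def by blast
  then show ?thesis
    using rels_atoms_less by (cases r) auto
qed

definition same_runs :: "nat \<Rightarrow> nat \<Rightarrow> 'a strdb \<Rightarrow> (nat \<Rightarrow> nat) \<Rightarrow> nat \<Rightarrow> 'a strdb \<Rightarrow> (nat \<Rightarrow> nat) \<Rightarrow> bool" where
  "same_runs m n1 R1 v1 n2 R2 v2 \<longleftrightarrow> (\<forall>c\<in>labels. \<forall>s\<in>terms m. \<forall>t\<in>terms m.
      seg_run R1 c (tval n1 v1 s) (tval n1 v1 t) = seg_run R2 c (tval n2 v2 s) (tval n2 v2 t))"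

lemma same_state_type_agree:
  assumes good1: "good_state n1 R1 A1 v1" and good2: "good_state n2 R2 A2 v2"
    and type: "state_type m n1 R1 A1 v1 = state_type m n2 R2 A2 v2"
  shows "same_order m n1 v1 n2 v2" "same_letters m n1 R1 v1 n2 R2 v2" "same_runs m n1 R1 v1 n2 R2 v2"
proof -
  have sat_eq: "sat n1 (state_interp R1 A1) v1 \<alpha> \<longleftrightarrow> sat n2 (state_interp R2 A2) v2 \<alpha>" if "\<alpha> \<in> atoms m" for \<alpha>
    using type that unfolding atom_type_def set_eq_iff by blast
  show "same_order m n1 v1 n2 v2"
    unfolding same_order_def
  proof (intro ballI conjI)
    fix s t assume "s \<in> terms m" "t \<in> terms m"
    then have "Less s t \<in> atoms m" "Eq s t \<in> atoms m"
      unfolding atoms_def by auto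
    then show "tval n1 v1 s < tval n1 v1 t \<longleftrightarrow> tval n2 v2 s < tval n2 v2 t"
      and "tval n1 v1 s = tval n1 v1 t \<longleftrightarrow> tval n2 v2 s = tval n2 v2 t"
      using sat_eq by fastforce+
  qed
  show "same_letters m n1 R1 v1 n2 R2 v2"
    unfolding same_letters_def
  proof
    fix t assume "t \<in> terms m"
    then have "Atom (Inl a) [t] \<in> atoms m" for a
      unfolding atoms_def by auto
    then have "tval n1 v1 t \<in> R1 a \<longleftrightarrow> tval n2 v2 t \<in> R2 a" for a
      using sat_eq[of "Atom (Inl a) [t]"] by (simp add: state_interp_def inp_interp_def)
    then show "letters R1 (tval n1 v1 t) = letters R2 (tval n2 v2 t)"
      unfolding letters_def by auto
  qed
  show "same_runs m n1 R1 v1 n2 R2 v2"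
    unfolding same_runs_def
  proof (intro ballI)
    fix c s t assume c: "c \<in> labels" and st: "s \<in> terms m" "t \<in> terms m"
    have "Atom (Inr (enc c)) [s, t] \<in> atoms m"
      unfolding atoms_def using c st by (intro UnI2 image_eqI[where x="(c, s, t)"]) auto
    then have "[tval n1 v1 s, tval n1 v1 t] \<in> A1 (enc c) \<longleftrightarrow> [tval n2 v2 s, tval n2 v2 t] \<in> A2 (enc c)"
      using sat_eq by (fastforce simp: state_interp_def)
    moreover have "tval n1 v1 r \<in> {1..n1}" "tval n2 v2 r \<in> {1..n2}" for r
      using good1 good2 tval_in_domain unfolding good_state_def by blast+
    ultimately show "seg_run R1 c (tval n1 v1 s) (tval n1 v1 t) = seg_run R2 c (tval n2 v2 s) (tval n2 v2 t)"
      using good1 good2 c unfolding good_state_def aux_invariant_def by auto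
  qed
qed

text \<open>Relabelling the gap by G turns the new run with label (h, q, q') into an old run with
  label (h \<circ> G, q, q').\<close>
lemma foldl_subst_segment_apply_rq_eq_gap:
  assumes k: "fst \<rho> = k" "k \<le> m" and val: "valuation n1 v1" "valuation n2 v2"
    and ord: "same_order m n1 v1 n2 v2" and lets: "same_letters m n1 R1 v1 n2 R2 v2"
    and runs: "same_runs m n1 R1 v1 n2 R2 v2"
    and st: "s \<in> terms m" "t \<in> terms m" and gap: "no_term_between m n1 v1 s t" and q: "q \<in> S"
  shows "foldl \<delta> q (subst_segment h (apply_rq n1 \<rho> (map v1 [0..<k]) R1) (tval n1 v1 s) (tval n1 v1 t))
       = foldl \<delta> q (subst_segment h (apply_rq n2 \<rho> (map v2 [0..<k]) R2) (tval n2 v2 s) (tval n2 v2 t))"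
proof -
  let ?u1 = "tval n1 v1 s" and ?w1 = "tval n1 v1 t" and ?u2 = "tval n2 v2 s" and ?w2 = "tval n2 v2 t"
  let ?R1' = "apply_rq n1 \<rho> (map v1 [0..<k]) R1" and ?R2' = "apply_rq n2 \<rho> (map v2 [0..<k]) R2"
  obtain G where G1: "\<And>y. y \<in> {?u1<..<?w1} \<Longrightarrow> letters ?R1' y = G (letters R1 y)"
    and G2: "\<And>y. y \<in> {?u2<..<?w2} \<Longrightarrow> letters ?R2' y = G (letters R2 y)"
    by (rule ex_gap_relabelling[OF k val ord lets st gap that])
  define q' where "q' = foldl \<delta> q (subst_segment (h \<circ> G) R1 ?u1 ?w1)"
  have "(h \<circ> G, q, q') \<in> labels"
    using q foldl_\<delta>_in_S by (simp add: q'_def)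
  moreover have "seg_run R1 (h \<circ> G, q, q') ?u1 ?w1"
    unfolding seg_run_def q'_def by simp
  ultimately have "seg_run R2 (h \<circ> G, q, q') ?u2 ?w2"
    using runs st unfolding same_runs_def by simp
  moreover have "subst_segment h ?R1' ?u1 ?w1 = subst_segment (h \<circ> G) R1 ?u1 ?w1"
    by (rule subst_segment_cong) (simp add: G1)
  moreover have "subst_segment h ?R2' ?u2 ?w2 = subst_segment (h \<circ> G) R2 ?u2 ?w2"
    by (rule subst_segment_cong) (simp add: G2)
  ultimately show ?thesis
    unfolding seg_run_def q'_def by simp
qed

lemma foldl_subst_segment_apply_rq_eq:
  assumes k: "fst \<rho> = k" "k \<le> m" and val: "valuation n1 v1" "valuation n2 v2"
    and ord: "same_order m n1 v1 n2 v2" and lets: "same_letters m n1 R1 v1 n2 R2 v2"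
    and runs: "same_runs m n1 R1 v1 n2 R2 v2"
  shows "s \<in> terms m \<Longrightarrow> t \<in> terms m \<Longrightarrow> q \<in> S \<Longrightarrow>
    foldl \<delta> q (subst_segment h (apply_rq n1 \<rho> (map v1 [0..<k]) R1) (tval n1 v1 s) (tval n1 v1 t))
    = foldl \<delta> q (subst_segment h (apply_rq n2 \<rho> (map v2 [0..<k]) R2) (tval n2 v2 s) (tval n2 v2 t))"
proof (induction "card {x \<in> tval n1 v1 ` terms m. tval n1 v1 s < x \<and> x < tval n1 v1 t}"
    arbitrary: s t q rule: less_induct)
  case less
  note st = less.prems(1,2) and q = less.prems(3)
  define R1' R2' where "R1' = apply_rq n1 \<rho> (map v1 [0..<k]) R1"
    and "R2' = apply_rq n2 \<rho> (map v2 [0..<k]) R2"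
  show ?case
  proof (cases "no_term_between m n1 v1 s t")
    case True
    then show ?thesis
      using foldl_subst_segment_apply_rq_eq_gap[OF k val ord lets runs st _ q] by blast
  next
    case False
    then obtain r where r: "r \<in> terms m" "tval n1 v1 s < tval n1 v1 r" "tval n1 v1 r < tval n1 v1 t"
      unfolding no_term_between_def by blast
    have r2: "tval n2 v2 s < tval n2 v2 r" "tval n2 v2 r < tval n2 v2 t"
      using same_orderD(1)[OF ord st(1) r(1)] same_orderD(1)[OF ord r(1) st(2)] r by blast+
    let ?between = "\<lambda>s t. {x \<in> tval n1 v1 ` terms m. tval n1 v1 s < x \<and> x < tval n1 v1 t}"
    have r_between: "tval n1 v1 r \<in> ?between s t"
      using r by auto
    have fewer: "card (?between s r) < card (?between s t)" "card (?between r t) < card (?between s t)"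
      using r r_between by (auto intro!: psubset_card_mono)
    define q1 where "q1 = foldl \<delta> q (subst_segment h R1' (tval n1 v1 s) (tval n1 v1 r))"
    have left: "q1 = foldl \<delta> q (subst_segment h R2' (tval n2 v2 s) (tval n2 v2 r))"
      using less(1)[OF fewer(1) st(1) r(1) q] unfolding q1_def R1'_def R2'_def by blast
    have middle: "letters R1' (tval n1 v1 r) = letters R2' (tval n2 v2 r)"
      unfolding R1'_def R2'_def using k ord lets val r(1) by (rule letters_apply_rq_eq_term)
    define q2 where "q2 = foldl \<delta> q1 (letter_word (h (letters R1' (tval n1 v1 r))))"
    have "q2 \<in> S"
      unfolding q2_def q1_def using q by (simp add: foldl_\<delta>_in_S)
    then have right: "foldl \<delta> q2 (subst_segment h R1' (tval n1 v1 r) (tval n1 v1 t))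
        = foldl \<delta> q2 (subst_segment h R2' (tval n2 v2 r) (tval n2 v2 t))"
      using less(1)[OF fewer(2) r(1) st(2)] unfolding R1'_def R2'_def by blast
    show ?thesis
      unfolding R1'_def[symmetric] R2'_def[symmetric]
      using subst_segment_split[OF r(2,3), of h R1'] subst_segment_split[OF r2, of h R2']
        left middle right
      unfolding q2_def q1_def by simp
  qed
qed

definition aux_prop :: "'a rq \<Rightarrow> 'a label \<Rightarrow> nat \<Rightarrow> 'a strdb \<Rightarrow> (nat \<Rightarrow> nat) \<Rightarrow> bool" where
  "aux_prop \<rho> c n R v \<longleftrightarrow> seg_run (apply_rq n \<rho> (map v [0..<fst \<rho>]) R) c (v (fst \<rho>)) (v (Suc (fst \<rho>)))"

definition query_prop :: "'a rq \<Rightarrow> nat \<Rightarrow> 'a strdb \<Rightarrow> (nat \<Rightarrow> nat) \<Rightarrow> bool" where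
  "query_prop \<rho> n R v \<longleftrightarrow> foldl \<delta> q0 (word n (apply_rq n \<rho> (map v [0..<fst \<rho>]) R)) \<in> F"

lemma aux_prop_type_invariant:
  assumes good1: "good_state n1 R1 A1 v1" and good2: "good_state n2 R2 A2 v2"
    and type: "state_type (fst \<rho> + 2) n1 R1 A1 v1 = state_type (fst \<rho> + 2) n2 R2 A2 v2"
    and c: "c \<in> labels" and holds: "aux_prop \<rho> c n1 R1 v1"
  shows "aux_prop \<rho> c n2 R2 v2"
proof -
  obtain h q q' where c_eq: "c = (h, q, q')" and q: "q \<in> S"
    using c by auto
  have val: "valuation n1 v1" "valuation n2 v2"
    using good1 good2 unfolding good_state_def by auto
  have "foldl \<delta> q (subst_segment h (apply_rq n1 \<rho> (map v1 [0..<fst \<rho>]) R1)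
        (tval n1 v1 (Var (fst \<rho>))) (tval n1 v1 (Var (Suc (fst \<rho>)))))
      = foldl \<delta> q (subst_segment h (apply_rq n2 \<rho> (map v2 [0..<fst \<rho>]) R2)
        (tval n2 v2 (Var (fst \<rho>))) (tval n2 v2 (Var (Suc (fst \<rho>)))))"
    by (rule foldl_subst_segment_apply_rq_eq[OF refl _ val same_state_type_agree[OF good1 good2 type]])
      (simp_all add: terms_intros q)
  then show ?thesis
    using holds unfolding aux_prop_def seg_run_def c_eq by simp
qed

lemma query_prop_type_invariant:
  assumes good1: "good_state n1 R1 A1 v1" and good2: "good_state n2 R2 A2 v2"
    and type: "state_type (fst \<rho>) n1 R1 A1 v1 = state_type (fst \<rho>) n2 R2 A2 v2"
    and holds: "query_prop \<rho> n1 R1 v1"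
  shows "query_prop \<rho> n2 R2 v2"
proof -
  define R1' R2' where "R1' = apply_rq n1 \<rho> (map v1 [0..<fst \<rho>]) R1"
    and "R2' = apply_rq n2 \<rho> (map v2 [0..<fst \<rho>]) R2"
  have val: "valuation n1 v1" "valuation n2 v2"
    using good1 good2 unfolding good_state_def by auto
  note agree = same_state_type_agree[OF good1 good2 type]
  have ends: "(n1 = 1) \<longleftrightarrow> (n2 = 1)"
    using same_orderD(2)[OF agree(1) terms_intros(1,2)] by auto
  have first: "letters R1' 1 = letters R2' 1" and last: "letters R1' n1 = letters R2' n2"
    using letters_apply_rq_eq_term[OF refl order_refl agree(1,2) val terms_intros(1)]
      letters_apply_rq_eq_term[OF refl order_refl agree(1,2) val terms_intros(2)]
    unfolding R1'_def R2'_def by simp_all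
  have "foldl \<delta> q0 (word n1 R1') = foldl \<delta> q0 (word n2 R2')"
  proof (cases "n1 = 1")
    case True
    moreover have "n2 = 1"
      using True ends by simp
    ultimately show ?thesis
      using first by (simp only: word_one)
  next
    case False
    then have n: "2 \<le> n1" "2 \<le> n2"
      using ends val unfolding valuation_def by auto
    define q where "q = foldl \<delta> q0 (letter_word (letters R1' 1))"
    have "q \<in> S"
      unfolding q_def using q0_in_S by (rule foldl_\<delta>_in_S)
    then have "foldl \<delta> q (subst_segment id R1' (tval n1 v1 Min) (tval n1 v1 Max))
        = foldl \<delta> q (subst_segment id R2' (tval n2 v2 Min) (tval n2 v2 Max))"
      unfolding R1'_def R2'_def
      by (rule foldl_subst_segment_apply_rq_eq[OF refl order_refl val agree terms_intros(1,2)])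
    then show ?thesis
      using first last unfolding word_split[OF n(1)] word_split[OF n(2)] q_def by simp
  qed
  then show ?thesis
    using holds unfolding query_prop_def R1'_def R2'_def by simp
qed

text \<open>Auxiliary symbol enc c holds the relation for label c, the last symbol is the query.\<close>
definition dfa_program :: "'a dynprog" where
  "dfa_program = \<lparr>naux = Suc (card labels), arity = (\<lambda>T. if T < card labels then 2 else 0),
     qsym = card labels,
     upd = (\<lambda>\<rho> T. if T < card labels then defining_formula (fst \<rho> + 2) (aux_prop \<rho> (inv_into labels enc T))
                 else defining_formula (fst \<rho>) (query_prop \<rho>))\<rparr>"

definition initial_aux :: "nat \<Rightarrow> nat \<Rightarrow> nat list set" where
  "initial_aux n T = (if T < card labels
     then {[i, j] | i j. i \<in> {1..n} \<and> j \<in> {1..n} \<and> seg_run (\<lambda>_. {}) (inv_into labels enc T) i j}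
     else {})"

lemma aux_invariant_initial_aux: "aux_invariant n (\<lambda>_. {}) (initial_aux n)"
  unfolding aux_invariant_def initial_aux_def by (simp add: enc_less inv_enc)

lemma wf_dfa_program: "wf_dynprog \<Delta> dfa_program"
  unfolding wf_dynprog_def
proof (intro conjI ballI allI impI)
  fix \<rho> T r assume "r \<in> rels (upd dfa_program \<rho> T)"
  then have "case r of Inl _ \<Rightarrow> True | Inr T \<Rightarrow> T < card labels"
    using rels_defining_formula by (simp add: dfa_program_def split: if_splits)
  then show "case r of Inl _ \<Rightarrow> True | Inr T' \<Rightarrow> T' < naux dfa_program"
    by (simp add: dfa_program_def split: sum.splits)
qed (simp_all add: dfa_program_def)

lemma upd_aux_aux_invariant:
  assumes n: "1 \<le> n" and as: "length as = fst \<rho>" "set as \<subseteq> {1..n}" and inv: "aux_invariant n R A"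
  shows "aux_invariant n (apply_rq n \<rho> as R) (upd_aux n dfa_program \<rho> as R A)"
  unfolding aux_invariant_def
proof
  fix c assume c: "c \<in> labels"
  have "sat n (state_interp R A) (env (as @ bs)) (defining_formula (fst \<rho> + 2) (aux_prop \<rho> c))
      \<longleftrightarrow> aux_prop \<rho> c n R (env (as @ bs))" if "set bs \<subseteq> {1..n}" for bs
  proof (rule sat_defining_formula)
    show "good_state n R A (env (as @ bs))"
      using valuation_env[OF n] as(2) that inv by (simp add: good_state_def)
  qed (rule aux_prop_type_invariant[OF _ _ _ c], assumption+)
  moreover have "aux_prop \<rho> c n R (env (as @ [i, j])) \<longleftrightarrow> seg_run (apply_rq n \<rho> as R) c i j" for i j
    using as(1) map_env_prefix[OF as(1)] unfolding aux_prop_def by (simp add: env_def nth_append)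
  ultimately show "upd_aux n dfa_program \<rho> as R A (enc c)
      = {[i, j] | i j. i \<in> {1..n} \<and> j \<in> {1..n} \<and> seg_run (apply_rq n \<rho> as R) c i j}"
    using enc_less[OF c] unfolding upd_aux_def dfa_program_def
    by (auto simp: inv_enc[OF c] length_Suc_conv numeral_2_eq_2)
qed

lemma upd_aux_query:
  assumes n: "1 \<le> n" and as: "length as = fst \<rho>" "set as \<subseteq> {1..n}" and inv: "aux_invariant n R A"
  shows "[] \<in> upd_aux n dfa_program \<rho> as R A (card labels) \<longleftrightarrow> foldl \<delta> q0 (word n (apply_rq n \<rho> as R)) \<in> F"
proof -
  have "[] \<in> upd_aux n dfa_program \<rho> as R A (card labels)
      \<longleftrightarrow> sat n (state_interp R A) (env as) (defining_formula (fst \<rho>) (query_prop \<rho>))"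
    unfolding upd_aux_def dfa_program_def by simp
  also have "\<dots> \<longleftrightarrow> query_prop \<rho> n R (env as)"
  proof (rule sat_defining_formula)
    show "good_state n R A (env as)"
      using valuation_env[OF n as(2)] inv by (simp add: good_state_def)
  qed (rule query_prop_type_invariant, assumption+)
  also have "\<dots> \<longleftrightarrow> foldl \<delta> q0 (word n (apply_rq n \<rho> as R)) \<in> F"
    using map_env_prefix[OF as(1), of "[]"] unfolding query_prop_def by simp
  finally show ?thesis .
qed

lemma run_dfa_program:
  assumes "1 \<le> n" "allowed_seq n \<Delta> R cs" "aux_invariant n R A" "cs \<noteq> []"
  shows "case run n dfa_program cs R A of (R', A') \<Rightarrow>
    ([] \<in> A' (card labels) \<longleftrightarrow> foldl \<delta> q0 (word n R') \<in> F)"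
  using assms(2-4)
proof (induction cs arbitrary: R A)
  case Nil
  then show ?case by simp
next
  case (Cons change cs)
  obtain \<rho> as where change: "change = (\<rho>, as)"
    by (cases change)
  with Cons.prems(1) have as: "length as = fst \<rho>" "set as \<subseteq> {1..n}"
    and allowed: "allowed_seq n \<Delta> (apply_rq n \<rho> as R) cs"
    by auto
  show ?case
  proof (cases "cs = []")
    case True
    then show ?thesis
      using change upd_aux_query[OF assms(1) as Cons.prems(2)] by simp
  next
    case False
    then show ?thesis
      using Cons.IH[OF allowed upd_aux_aux_invariant[OF assms(1) as Cons.prems(2)]] change by simp
  qed
qed

lemma dynprop_init_maintainable_dfa: "dynprop_init_maintainable \<Delta> {w. foldl \<delta> q0 w \<in> F}"
  unfolding dynprop_init_maintainable_def
proof (intro exI conjI)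
  show "wf_dynprog \<Delta> dfa_program"
    by (rule wf_dfa_program)
  show "maintains_init \<Delta> {w. foldl \<delta> q0 w \<in> F} dfa_program initial_aux"
    unfolding maintains_init_def
  proof (intro allI impI)
    fix n cs assume "1 \<le> n" "cs \<noteq> []" "allowed_seq n \<Delta> (\<lambda>_. {}) cs"
    moreover obtain R A where "run n dfa_program cs (\<lambda>_. {}) (initial_aux n) = (R, A)"
      by fastforce
    ultimately show "let (R, A) = run n dfa_program cs (\<lambda>_. {}) (initial_aux n)
        in [] \<in> A (qsym dfa_program) \<longleftrightarrow> word n R \<in> {w. foldl \<delta> q0 w \<in> F}"
      using run_dfa_program[OF _ _ aux_invariant_initial_aux, of n \<Delta> cs]
      by (simp add: dfa_program_def)
  qed
qed

end

text \<open>Every quantifier-free replacement query is handled.\<close>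
theorem theorem6p1:
  fixes L :: "('a::finite) list set" and \<Delta> :: "'a rq set"
  assumes "regular L" and "finite \<Delta>"
  shows "dynprop_init_maintainable \<Delta> L"
proof -
  obtain S :: "nat set" and \<delta> :: "nat \<Rightarrow> 'a \<Rightarrow> nat" and q0 F where
    dfa: "finite S" "q0 \<in> S" "\<forall>q\<in>S. \<forall>a. \<delta> q a \<in> S" and L: "L = {w. foldl \<delta> q0 w \<in> F}"
    using assms(1) unfolding regular_def by blast
  have "finite (UNIV \<times> S \<times> S :: 'a label set)"
    using dfa(1) by simp
  then obtain enc :: "'a label \<Rightarrow> nat" where
    "bij_betw enc (UNIV \<times> S \<times> S) {0..<card (UNIV \<times> S \<times> S :: 'a label set)}"
    by (rule ex_bij_betw_finite_nat[elim_format]) blast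
  then interpret dfa_aux_encoding S \<delta> q0 F enc
    using dfa(1,2,3) by unfold_locales blast+
  show ?thesis
    unfolding L by (rule dynprop_init_maintainable_dfa)
qed

end
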